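(* Let $X_1,X_2,\ldots$ be i.i.d. real random variables with distribution function $F$ having finite variance and a continuous density $f$. Let $\hat F_n$ be the empirical distribution function of $X_1,\ldots,X_n$. If the two-sided hazard function satisfies $h(x)\to\infty$ as $|x|\to\infty$, then Condition 1 holds: \[ n\int_0^{1/n}\bigl(\hat F_n^{-1}(p)-F^{-1}(p)\bigr)^2dp\xrightarrow{p}0 \quad\text{and}\quad n\int_{(n-1)/n}^1\bigl(\hat F_n^{-1}(p)-F^{-1}(p)\bigr)^2dp\xrightarrow{p}0 \] as $n\to\infty$. Moreover, if $f>0$ on $\{x: 0<F(x)<1\}$ and Condition 2 holds, namely \[ \int_{\{x:\,0<F(x)<1\}}\frac{F(x)(1-F(x))}{f(x)}\,dx<\infty, \] then Condition 1 holds.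
   Context: Here $F^{-1}(p)=\inf\{x: F(x)\ge p\}$ and $\xi_p=F^{-1}(p)$. The empirical distribution function is $\hat F_n(x)=n^{-1}\sum_{i=1}^n\mathbf 1_{\{X_i\le x\}}$, with $\hat F_n^{-1}$ defined in the same way. Let $\bar F(x)=\mathbb P(X>x)=1-F(x)$. The two-sided hazard function is $h(x)=f(x)/\bar F(x)$ for $x\ge\xi_{1/2}$ and $h(x)=f(x)/F(x)$ for $x<\xi_{1/2}$. *)

theory Defs
  imports "HOL-Probability.Probability"
begin

definition quantile :: "(real \<Rightarrow> real) \<Rightarrow> real \<Rightarrow> real" where
  "quantile G p = Inf {x. p \<le> G x}"

definition emp_cdf :: "(nat \<Rightarrow> 'a \<Rightarrow> real) \<Rightarrow> nat \<Rightarrow> 'a \<Rightarrow> real \<Rightarrow> real" where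
  "emp_cdf X n w x = real (card {i. i < n \<and> X i w \<le> x}) / real n"

definition hazard :: "(real \<Rightarrow> real) \<Rightarrow> (real \<Rightarrow> real) \<Rightarrow> real \<Rightarrow> real" where
  "hazard F f x = (if quantile F (1/2) \<le> x then f x / (1 - F x) else f x / F x)"

definition conv_prob_zero :: "'a measure \<Rightarrow> (nat \<Rightarrow> 'a \<Rightarrow> ennreal) \<Rightarrow> bool" where
  "conv_prob_zero M Y \<longleftrightarrow>
     (\<forall>e>0. (\<lambda>n. measure M {w \<in> space M. Y n w > ennreal e}) \<longlonglongrightarrow> 0)"

definition condition1 :: "'a measure \<Rightarrow> (nat \<Rightarrow> 'a \<Rightarrow> real) \<Rightarrow> (real \<Rightarrow> real) \<Rightarrow> bool" where
  "condition1 M X F \<longleftrightarrow>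
     conv_prob_zero M (\<lambda>n w. ennreal (real n) *
        (\<integral>\<^sup>+ p \<in> {0..1/real n}.
            ennreal ((quantile (emp_cdf X n w) p - quantile F p)\<^sup>2) \<partial>lborel)) \<and>
     conv_prob_zero M (\<lambda>n w. ennreal (real n) *
        (\<integral>\<^sup>+ p \<in> {(real n - 1)/real n..1}.
            ennreal ((quantile (emp_cdf X n w) p - quantile F p)\<^sup>2) \<partial>lborel))"

end

theory Submission
  imports Defs
begin

(* Both hypotheses make each tail of F thin in a logarithmic sense: deep in the lower tail,
   y \<le> z implies z - y \<le> d (1 + ln (F z / F y)) for an arbitrarily small d.  Under the hazard
   condition this follows by comparing d ln F with the identity; under Condition 2 by adding the
   integral of F/f, which is small in the tail, and using u/d + d/u \<ge> 2 for u = F/f.  The upper tail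
   of X is the lower tail of -X.
   On (0, 1/n] the empirical quantile is the sample minimum m.  With a = F^{-1}(1/n), thinness gives
   (a - F^{-1}(p))^2 \<le> c (n p)^{-1/2}, so n times the integral is at most 2 (m - a)^2 + 4 c.  If this
   exceeds e, then |m - a| > \<delta>, so either some X_i < a - \<delta> (probability \<le> n F(a - \<delta>)) or all
   X_i > a + \<delta> (probability (1 - F(a + \<delta>))^n); thinness makes both probabilities small. *)

section \<open>Quantile functions\<close>

lemma cdf_quantile_eq:
  fixes F :: "real \<Rightarrow> real"
  assumes cont: "continuous_on UNIV F"
    and bot: "(F \<longlongrightarrow> 0) at_bot" and top: "(F \<longlongrightarrow> 1) at_top"
    and p: "0 < p" "p < 1"
  shows "F (quantile F p) = p"
proof -
  define S where "S = {x. p \<le> F x}"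
  obtain x1 where x1: "\<And>x. x1 \<le> x \<Longrightarrow> p < F x"
    using order_tendstoD(1)[OF top \<open>p < 1\<close>] by (auto simp: eventually_at_top_linorder)
  have "S \<noteq> {}" using x1[of x1] by (auto simp: S_def intro: less_imp_le)
  obtain x0 where x0: "\<And>x. x \<le> x0 \<Longrightarrow> F x < p"
    using order_tendstoD(2)[OF bot \<open>0 < p\<close>] by (auto simp: eventually_at_bot_linorder)
  have "bdd_below S"
    by (rule bdd_belowI[of _ x0]) (metis S_def mem_Collect_eq linorder_not_le less_imp_le x0)
  have "closed S"
    unfolding S_def using cont
    by (intro closed_Collect_le continuous_intros) (simp_all add: continuous_on_eq_continuous_at)
  have q: "quantile F p = Inf S" by (simp add: quantile_def S_def)
  have "quantile F p \<in> S"
    unfolding q by (rule closed_contains_Inf) fact+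
  moreover have "F (quantile F p) \<le> p"
  proof (rule tendsto_upperbound)
    show "(F \<longlongrightarrow> F (quantile F p)) (at_left (quantile F p))"
      using cont by (simp add: continuous_on_eq_continuous_at isCont_def filterlim_at_split)
    have "F x < p" if "x < quantile F p" for x
      using cInf_lower[OF _ \<open>bdd_below S\<close>, of x] that by (force simp: q S_def)
    then show "\<forall>\<^sub>F x in at_left (quantile F p). F x \<le> p"
      by (auto simp: eventually_at_left_field intro!: exI[of _ "quantile F p - 1"] less_imp_le)
  qed simp
  ultimately show ?thesis by (simp add: S_def)
qed

lemma quantile_mono_on:
  fixes G :: "real \<Rightarrow> real"
  assumes "mono G"
  shows "mono_on {p. (\<exists>x. G x < p) \<and> (\<exists>x. p \<le> G x)} (quantile G)"
proof (rule mono_onI)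
  fix p p' assume p: "p \<in> {p. (\<exists>x. G x < p) \<and> (\<exists>x. p \<le> G x)}"
    and p': "p' \<in> {p. (\<exists>x. G x < p) \<and> (\<exists>x. p \<le> G x)}" and "p \<le> p'"
  obtain x where "G x < p" using p by blast
  then have "bdd_below {y. p \<le> G y}"
    using \<open>mono G\<close> by (intro bdd_belowI[of _ x]) (smt (verit) mem_Collect_eq monoD)
  moreover have "{y. p' \<le> G y} \<noteq> {}" using p' by blast
  ultimately show "quantile G p \<le> quantile G p'"
    unfolding quantile_def using \<open>p \<le> p'\<close> by (intro cInf_superset_mono) auto
qed

(* Where {x. p \<le> G x} is all of \<real> or empty, quantile G takes the junk values Inf UNIV and
   Inf {}; on each of these two intervals it is constant, and monotone on the remaining one. *)
lemma borel_measurable_quantile: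
  fixes G :: "real \<Rightarrow> real"
  assumes "mono G"
  shows "quantile G \<in> borel_measurable borel"
proof (rule borel_measurable_piecewise_mono)
  let ?C = "{{p. \<forall>x. p \<le> G x}, {p. \<forall>x. G x < p}, {p. (\<exists>x. G x < p) \<and> (\<exists>x. p \<le> G x)}}"
  show "countable ?C" by simp
  show "\<Union> ?C = UNIV" by (auto simp: not_le) (meson not_less)
  fix c assume "c \<in> ?C"
  then show "c \<in> sets borel"
    by (auto intro!: real_interval_borel_measurable simp: is_interval_1)
       (meson order_trans le_less_trans less_le_trans)+
  show "mono_on c (quantile G)"
    using \<open>c \<in> ?C\<close> quantile_mono_on[OF assms]
    by (auto simp: quantile_def mono_on_def not_le[symmetric])
qed

lemma mono_emp_cdf: "mono (emp_cdf X n w)"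
  unfolding emp_cdf_def
  by (intro monoI divide_right_mono of_nat_mono card_mono) auto

lemma quantile_emp_cdf_Min:
  assumes p: "0 < p" "p \<le> 1 / real n"
  shows "quantile (emp_cdf X n w) p = Min ((\<lambda>i. X i w) ` {..<n})"
proof -
  have n: "0 < n" using p by (auto intro: ccontr)
  have "p \<le> emp_cdf X n w x \<longleftrightarrow> Min ((\<lambda>i. X i w) ` {..<n}) \<le> x" for x
  proof -
    let ?k = "card {i. i < n \<and> X i w \<le> x}"
    have "p \<le> real ?k / real n \<longleftrightarrow> 1 \<le> ?k"
    proof
      assume "p \<le> real ?k / real n"
      then show "1 \<le> ?k" using p by (metis div_0 less_one linorder_not_le of_nat_0)
    next
      assume "1 \<le> ?k"
      then have "1 / real n \<le> real ?k / real n" by (simp add: divide_right_mono)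
      then show "p \<le> real ?k / real n" using p by linarith
    qed
    also have "\<dots> \<longleftrightarrow> (\<exists>i<n. X i w \<le> x)" by (auto simp: Suc_le_eq card_gt_0_iff)
    also have "\<dots> \<longleftrightarrow> Min ((\<lambda>i. X i w) ` {..<n}) \<le> x" using n by (subst Min_le_iff) auto
    finally show ?thesis by (simp add: emp_cdf_def)
  qed
  then show ?thesis by (simp add: quantile_def atLeast_def[symmetric])
qed

lemma quantile_emp_cdf_Max:
  assumes n: "0 < n" and p: "(real n - 1) / real n < p" "p \<le> 1"
  shows "quantile (emp_cdf X n w) p = Max ((\<lambda>i. X i w) ` {..<n})"
proof -
  have "p \<le> emp_cdf X n w x \<longleftrightarrow> Max ((\<lambda>i. X i w) ` {..<n}) \<le> x" for x
  proof -
    let ?S = "{i. i < n \<and> X i w \<le> x}"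
    have sub: "?S \<subseteq> {..<n}" by auto
    then have "card ?S \<le> n" using card_mono[of "{..<n}" ?S] by simp
    have "p \<le> real (card ?S) / real n \<longleftrightarrow> card ?S = n"
    proof
      assume "p \<le> real (card ?S) / real n"
      then have "(real n - 1) / real n < real (card ?S) / real n" using p(1) by linarith
      then have "real n - 1 < real (card ?S)" using n by (simp add: divide_less_cancel)
      then show "card ?S = n" using \<open>card ?S \<le> n\<close> by linarith
    next
      assume "card ?S = n"
      then show "p \<le> real (card ?S) / real n" using n p by simp
    qed
    also have "\<dots> \<longleftrightarrow> ?S = {..<n}" using card_subset_eq[OF finite_lessThan sub] by (metis card_lessThan)
    also have "\<dots> \<longleftrightarrow> (\<forall>i<n. X i w \<le> x)" by (auto simp: set_eq_iff)
    also have "\<dots> \<longleftrightarrow> Max ((\<lambda>i. X i w) ` {..<n}) \<le> x" using n by (subst Max_le_iff) auto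
    finally show ?thesis by (simp add: emp_cdf_def)
  qed
  then show ?thesis by (simp add: quantile_def atLeast_def[symmetric])
qed

section \<open>Thin lower tails\<close>

(* In terms of the quantile function Q of G: Q t - Q s \<le> d (1 + ln (t / s)) for s \<le> t \<le> t0.
   An exponential lower tail of scale \<sigma> fails this for d < \<sigma>. *)
definition thin_lower_tail :: "(real \<Rightarrow> real) \<Rightarrow> bool" where
  "thin_lower_tail G \<longleftrightarrow>
     (\<forall>d>0. \<exists>t>0. \<forall>y z. y \<le> z \<longrightarrow> 0 < G y \<longrightarrow> G z \<le> t \<longrightarrow> z - y \<le> d * (1 + ln (G z / G y)))"

lemma thin_lower_tailE:
  assumes "thin_lower_tail G" "0 < d"
  obtains t where "0 < t"
    "\<And>y z. y \<le> z \<Longrightarrow> 0 < G y \<Longrightarrow> G z \<le> t \<Longrightarrow> z - y \<le> d * (1 + ln (G z / G y))"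
  using assms unfolding thin_lower_tail_def by blast

lemma thin_lower_tail_if_hazard:
  fixes F f :: "real \<Rightarrow> real"
  assumes deriv: "\<And>x. (F has_real_derivative f x) (at x)" and "mono F" and "\<And>x. 0 \<le> F x"
    and hazard: "filterlim (\<lambda>x. f x / F x) at_top at_bot"
  shows "thin_lower_tail F"
  unfolding thin_lower_tail_def
proof (intro allI impI)
  fix d :: real assume "0 < d"
  obtain x0 where x0: "\<And>x. x \<le> x0 \<Longrightarrow> 1 / d \<le> f x / F x"
    using hazard by (auto simp: filterlim_at_top eventually_at_bot_linorder)
  have "0 < F x0"
    using x0[of x0] \<open>0 < d\<close> \<open>0 \<le> F x0\<close> by (cases "F x0 = 0") auto
  show "\<exists>t>0. \<forall>y z. y \<le> z \<longrightarrow> 0 < F y \<longrightarrow> F z \<le> t \<longrightarrow> z - y \<le> d * (1 + ln (F z / F y))"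
  proof (intro exI[of _ "F x0 / 2"] conjI allI impI)
    fix y z assume "y \<le> z" "0 < F y" "F z \<le> F x0 / 2"
    have "z \<le> x0"
      using monoD[OF \<open>mono F\<close>, of x0 z] \<open>F z \<le> F x0 / 2\<close> \<open>0 < F x0\<close> by (cases "z \<le> x0") (auto simp: not_le)
    have pos: "0 < F x" if "y \<le> x" for x using monoD[OF \<open>mono F\<close> that] \<open>0 < F y\<close> by linarith
    have D: "((\<lambda>x. d * ln (F x) - x) has_real_derivative d * (f x / F x) - 1) (at x)" if "y \<le> x" for x
      using pos[OF that] by (auto intro!: derivative_eq_intros deriv)
    have "d * ln (F y) - y \<le> d * ln (F z) - z"
    proof (rule DERIV_nonneg_imp_increasing_open[OF \<open>y \<le> z\<close>])
      fix x assume x: "y < x" "x < z"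
      have "1 / d \<le> f x / F x" using x0[of x] x \<open>z \<le> x0\<close> by simp
      then have "1 \<le> d * (f x / F x)" using \<open>0 < d\<close> by (simp add: divide_le_eq mult.commute)
      then show "\<exists>D. ((\<lambda>x. d * ln (F x) - x) has_real_derivative D) (at x) \<and> 0 \<le> D"
        using D[of x] x by auto
    next
      show "continuous_on {y..z} (\<lambda>x. d * ln (F x) - x)"
        by (rule DERIV_continuous_on[where D="\<lambda>x. d * (f x / F x) - 1"])
           (use D in \<open>auto intro: has_field_derivative_at_within\<close>)
    qed
    then have "z - y \<le> d * ln (F z / F y)"
      using pos[of z] \<open>0 < F y\<close> \<open>y \<le> z\<close> by (simp add: ln_div algebra_simps)
    then show "z - y \<le> d * (1 + ln (F z / F y))" using \<open>0 < d\<close> by (simp add: algebra_simps)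
  qed (use \<open>0 < F x0\<close> in simp)
qed

lemma set_nn_integral_lower_levels_small:
  fixes F :: "real \<Rightarrow> real" and g :: "real \<Rightarrow> ennreal"
  assumes [measurable]: "F \<in> borel_measurable borel" "g \<in> borel_measurable borel"
    and fin: "(\<integral>\<^sup>+x \<in> {x. 0 < F x \<and> F x < 1}. g x \<partial>lborel) < \<infinity>" and "0 < \<epsilon>"
  obtains t where "0 < t" "t \<le> 1/2" "(\<integral>\<^sup>+x \<in> {x. 0 < F x \<and> F x \<le> t}. g x \<partial>lborel) < \<epsilon>"
proof -
  define A where "A k = {x. 0 < F x \<and> F x \<le> 1 / (real k + 2)}" for k :: nat
  have A_sets: "A k \<in> sets borel" for k unfolding A_def by measurable
  have sub: "A k \<subseteq> {x. 0 < F x \<and> F x < 1}" for k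
  proof -
    have "1 / (real k + 2) < 1" by simp
    then show ?thesis unfolding A_def by (auto intro: order.strict_trans1)
  qed
  have "emeasure (density lborel g) (A k) \<noteq> \<infinity>" for k
    using nn_set_integral_set_mono[OF sub[of k], of lborel g] fin A_sets
    by (simp add: emeasure_density top.not_eq_extremum)
  moreover have "antimono A"
  proof (rule antimonoI)
    fix k k' :: nat assume "k \<le> k'"
    then have "1 / (real k' + 2) \<le> 1 / (real k + 2)" by (simp add: frac_le)
    then show "A k' \<le> A k" unfolding A_def by auto
  qed
  moreover have "(\<Inter>k. A k) = {}"
  proof safe
    fix x assume x: "x \<in> (\<Inter>k. A k)"
    then have "0 < F x" by (auto simp: A_def)
    obtain k :: nat where "1 / F x < real k" using reals_Archimedean2 by blast
    then have "1 / (real k + 2) < F x" using \<open>0 < F x\<close> by (simp add: field_simps)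
    moreover have "F x \<le> 1 / (real k + 2)" using x by (auto simp: A_def)
    ultimately show "x \<in> {}" by simp
  qed
  moreover have "range A \<subseteq> sets (density lborel g)" using A_sets by auto
  ultimately have "(\<lambda>k. emeasure (density lborel g) (A k)) \<longlonglongrightarrow> 0"
    using Lim_emeasure_decseq[of A "density lborel g"] by auto
  then have "\<forall>\<^sub>F k in sequentially. emeasure (density lborel g) (A k) < \<epsilon>"
    using \<open>0 < \<epsilon>\<close> by (rule order_tendstoD(2))
  then obtain k where "emeasure (density lborel g) (A k) < \<epsilon>"
    by (auto simp: eventually_sequentially)
  then show ?thesis
    by (intro that[of "1 / (real k + 2)"]) (use A_sets in \<open>auto simp: A_def emeasure_density\<close>)
qed

lemma spacing_le_mills_integral:
  fixes F f :: "real \<Rightarrow> real"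
  assumes deriv: "\<And>x. x \<in> {y..z} \<Longrightarrow> (F has_real_derivative f x) (at x)"
    and F_pos: "\<And>x. x \<in> {y..z} \<Longrightarrow> 0 < F x" and f_pos: "\<And>x. x \<in> {y..z} \<Longrightarrow> 0 < f x"
    and "continuous_on {y..z} f" and "y \<le> z" and "0 < d"
  shows "z - y \<le> integral {y..z} (\<lambda>u. F u / f u) / d + d * ln (F z / F y)"
proof -
  have "continuous_on {y..z} F"
    using deriv DERIV_isCont by (intro continuous_at_imp_continuous_on) blast
  then have "continuous_on {y..z} (\<lambda>u. F u / f u)"
    using \<open>continuous_on {y..z} f\<close> f_pos by (intro continuous_intros) force+
  define \<psi> where "\<psi> x = integral {y..x} (\<lambda>u. F u / f u) / d + d * ln (F x) - x" for x
  have D: "(\<psi> has_real_derivative (F x / f x) / d + d * (f x / F x) - 1) (at x within {y..z})"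
    if "x \<in> {y..z}" for x
    unfolding \<psi>_def using F_pos[OF that] that \<open>0 < d\<close>
    by (auto intro!: derivative_eq_intros integral_has_real_derivative
        \<open>continuous_on {y..z} (\<lambda>u. F u / f u)\<close> has_field_derivative_at_within[OF deriv])
  have "\<psi> y \<le> \<psi> z"
  proof (rule DERIV_nonneg_imp_increasing_open[OF \<open>y \<le> z\<close>])
    fix x assume x: "y < x" "x < z"
    have "0 < F x / (d * f x)" using F_pos[of x] f_pos[of x] x \<open>0 < d\<close> by simp
    from plus_inverse_ge_2[OF this]
    have "0 \<le> (F x / f x) / d + d * (f x / F x) - 1" by (simp add: field_simps)
    moreover have "(\<psi> has_real_derivative (F x / f x) / d + d * (f x / F x) - 1) (at x)"
      using D[of x] x by (simp add: at_within_Icc_at)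
    ultimately show "\<exists>D. (\<psi> has_real_derivative D) (at x) \<and> 0 \<le> D" by blast
  qed (rule DERIV_continuous_on[OF D])
  then show ?thesis
    using F_pos[of y] F_pos[of z] \<open>y \<le> z\<close> by (simp add: \<psi>_def ln_div algebra_simps)
qed

lemma nn_integral_mills_ratio_le:
  fixes F f :: "real \<Rightarrow> real"
  assumes cont: "continuous_on UNIV F" "continuous_on UNIV f"
    and F_le: "\<And>x. x \<in> {y..z} \<Longrightarrow> 0 \<le> F x \<and> F x \<le> 1/2" and f_pos: "\<And>x. x \<in> {y..z} \<Longrightarrow> 0 < f x"
  shows "ennreal (integral {y..z} (\<lambda>u. F u / f u))
    \<le> 2 * (\<integral>\<^sup>+x \<in> {y..z}. ennreal (F x * (1 - F x) / f x) \<partial>lborel)"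
proof -
  have [measurable]: "F \<in> borel_measurable borel" "f \<in> borel_measurable borel"
    using cont by (simp_all add: borel_measurable_continuous_onI)
  have "((\<lambda>u. F u / f u) has_integral integral {y..z} (\<lambda>u. F u / f u)) {y..z}"
    using cont f_pos
    by (intro integrable_integral integrable_continuous_real continuous_intros)
       (force intro: continuous_on_subset)+
  moreover have "0 \<le> F x / f x" if "x \<in> {y..z}" for x
    using F_le[OF that] f_pos[OF that] by simp
  ultimately have "ennreal (integral {y..z} (\<lambda>u. F u / f u)) = (\<integral>\<^sup>+x \<in> {y..z}. ennreal (F x / f x) \<partial>lborel)"
    by (intro nn_integral_has_integral_lebesgue'[symmetric])
  also have "\<dots> \<le> (\<integral>\<^sup>+x. 2 * (ennreal (F x * (1 - F x) / f x) * indicator {y..z} x) \<partial>lborel)"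
  proof (intro nn_integral_mono)
    fix x
    show "ennreal (F x / f x) * indicator {y..z} x \<le> 2 * (ennreal (F x * (1 - F x) / f x) * indicator {y..z} x)"
    proof (cases "x \<in> {y..z}")
      case True
      have "F x \<le> 2 * (F x * (1 - F x))"
        using mult_left_le[of "2 * F x" "F x"] F_le[OF True] by (simp add: algebra_simps)
      then have "F x / f x \<le> 2 * (F x * (1 - F x) / f x)"
        using f_pos[OF True] by (simp add: divide_right_mono)
      then have "ennreal (F x / f x) \<le> ennreal (2 * (F x * (1 - F x) / f x))" by (rule ennreal_leI)
      also have "\<dots> = 2 * ennreal (F x * (1 - F x) / f x)"
        using F_le[OF True] f_pos[OF True] by (subst ennreal_mult'') auto
      finally show ?thesis using True by simp
    qed simp
  qed
  also have "\<dots> = 2 * (\<integral>\<^sup>+x \<in> {y..z}. ennreal (F x * (1 - F x) / f x) \<partial>lborel)"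
    by (rule nn_integral_cmult) measurable
  finally show ?thesis .
qed

lemma thin_lower_tail_if_integrable:
  fixes F f :: "real \<Rightarrow> real"
  assumes deriv: "\<And>x. (F has_real_derivative f x) (at x)" and "mono F"
    and f_cont: "continuous_on UNIV f" and f_pos: "\<And>x. 0 < F x \<Longrightarrow> F x < 1 \<Longrightarrow> 0 < f x"
    and fin: "(\<integral>\<^sup>+x \<in> {x. 0 < F x \<and> F x < 1}. ennreal (F x * (1 - F x) / f x) \<partial>lborel) < \<infinity>"
  shows "thin_lower_tail F"
  unfolding thin_lower_tail_def
proof (intro allI impI)
  fix d :: real assume "0 < d"
  have F_cont: "continuous_on UNIV F"
    using deriv DERIV_isCont by (intro continuous_at_imp_continuous_on) blast
  have [measurable]: "F \<in> borel_measurable borel" "f \<in> borel_measurable borel"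
    using F_cont f_cont by (simp_all add: borel_measurable_continuous_onI)
  obtain t where t: "0 < t" "t \<le> 1/2"
    and small: "(\<integral>\<^sup>+x \<in> {x. 0 < F x \<and> F x \<le> t}. ennreal (F x * (1 - F x) / f x) \<partial>lborel) < ennreal (d\<^sup>2 / 2)"
    using set_nn_integral_lower_levels_small[OF _ _ fin, of "ennreal (d\<^sup>2 / 2)"] \<open>0 < d\<close> by auto
  show "\<exists>t>0. \<forall>y z. y \<le> z \<longrightarrow> 0 < F y \<longrightarrow> F z \<le> t \<longrightarrow> z - y \<le> d * (1 + ln (F z / F y))"
  proof (intro exI[of _ t] conjI allI impI)
    fix y z assume "y \<le> z" "0 < F y" "F z \<le> t"
    have level: "0 < F x \<and> F x \<le> t" if "x \<in> {y..z}" for x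
      using monoD[OF \<open>mono F\<close>, of y x] monoD[OF \<open>mono F\<close>, of x z] that \<open>0 < F y\<close> \<open>F z \<le> t\<close> by auto
    have f_pos': "0 < f x" if "x \<in> {y..z}" for x using f_pos level[OF that] t by simp
    have "ennreal (integral {y..z} (\<lambda>u. F u / f u))
        \<le> 2 * (\<integral>\<^sup>+x \<in> {y..z}. ennreal (F x * (1 - F x) / f x) \<partial>lborel)"
      using level t by (intro nn_integral_mills_ratio_le F_cont f_cont f_pos') fastforce+
    also have "\<dots> \<le> 2 * (\<integral>\<^sup>+x \<in> {x. 0 < F x \<and> F x \<le> t}. ennreal (F x * (1 - F x) / f x) \<partial>lborel)"
      using level by (intro mult_left_mono nn_set_integral_set_mono) auto
    also have "\<dots> < 2 * ennreal (d\<^sup>2 / 2)"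
      using small by (intro ennreal_mult_strict_left_mono) auto
    also have "\<dots> = ennreal (d\<^sup>2)"
      by (subst ennreal_numeral[symmetric], subst ennreal_mult[symmetric]) auto
    finally have "integral {y..z} (\<lambda>u. F u / f u) < d\<^sup>2"
      by (cases "0 \<le> integral {y..z} (\<lambda>u. F u / f u)")
         (auto simp: ennreal_less_iff intro: less_le_trans[OF _ zero_le_power2])
    then have "integral {y..z} (\<lambda>u. F u / f u) / d \<le> d"
      using \<open>0 < d\<close> by (simp add: divide_le_eq power2_eq_square)
    then show "z - y \<le> d * (1 + ln (F z / F y))"
      using spacing_le_mills_integral[of y z F f d] deriv level f_pos' f_cont \<open>y \<le> z\<close> \<open>0 < d\<close>
      by (fastforce simp: algebra_simps intro: continuous_on_subset)
  qed (use t in simp)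
qed

lemma reflected_cdf_has_real_derivative:
  assumes "\<And>x. (F has_real_derivative f x) (at x)"
  shows "((\<lambda>x. 1 - F (- x)) has_real_derivative f (- x)) (at x)"
  using DERIV_chain2[OF assms DERIV_minus[OF DERIV_ident]] by (auto intro!: derivative_eq_intros)

lemma thin_upper_tail_if_hazard:
  fixes F f :: "real \<Rightarrow> real"
  assumes deriv: "\<And>x. (F has_real_derivative f x) (at x)" and "mono F" and "\<And>x. F x \<le> 1"
    and hazard: "filterlim (\<lambda>x. f x / (1 - F x)) at_top at_top"
  shows "thin_lower_tail (\<lambda>x. 1 - F (- x))"
proof (rule thin_lower_tail_if_hazard)
  show "((\<lambda>x. 1 - F (- x)) has_real_derivative f (- x)) (at x)" for x
    using deriv by (rule reflected_cdf_has_real_derivative)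
  show "mono (\<lambda>x. 1 - F (- x))" using \<open>mono F\<close> by (auto simp: mono_def)
  show "0 \<le> 1 - F (- x)" for x using \<open>F (- x) \<le> 1\<close> by simp
  show "filterlim (\<lambda>x. f (- x) / (1 - F (- x))) at_top at_bot"
    using filterlim_compose[OF hazard filterlim_uminus_at_top_at_bot] by (simp add: o_def)
qed

lemma thin_upper_tail_if_integrable:
  fixes F f :: "real \<Rightarrow> real"
  assumes deriv: "\<And>x. (F has_real_derivative f x) (at x)" and "mono F"
    and f_cont: "continuous_on UNIV f" and f_pos: "\<And>x. 0 < F x \<Longrightarrow> F x < 1 \<Longrightarrow> 0 < f x"
    and fin: "(\<integral>\<^sup>+x \<in> {x. 0 < F x \<and> F x < 1}. ennreal (F x * (1 - F x) / f x) \<partial>lborel) < \<infinity>"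
  shows "thin_lower_tail (\<lambda>x. 1 - F (- x))"
proof (rule thin_lower_tail_if_integrable[where f = "\<lambda>x. f (- x)"])
  show "((\<lambda>x. 1 - F (- x)) has_real_derivative f (- x)) (at x)" for x
    using deriv by (rule reflected_cdf_has_real_derivative)
  show "mono (\<lambda>x. 1 - F (- x))" using \<open>mono F\<close> by (auto simp: mono_def)
  show "continuous_on UNIV (\<lambda>x. f (- x))"
    by (rule continuous_on_compose2[OF f_cont]) (auto intro: continuous_intros)
  show "0 < f (- x)" if "0 < 1 - F (- x)" "1 - F (- x) < 1" for x
    using f_pos[of "- x"] that by simp
  have F_cont: "continuous_on UNIV F"
    using deriv DERIV_isCont by (intro continuous_at_imp_continuous_on) blast
  define g where "g x = ennreal (F x * (1 - F x) / f x) * indicator {x. 0 < F x \<and> F x < 1} x" for x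
  have [measurable]: "F \<in> borel_measurable borel" "f \<in> borel_measurable borel"
    using F_cont f_cont by (simp_all add: borel_measurable_continuous_onI)
  have "g \<in> borel_measurable borel" unfolding g_def by measurable
  from nn_integral_real_affine[OF this, of "-1" 0]
  have "(\<integral>\<^sup>+x. g (- x) \<partial>lborel) = (\<integral>\<^sup>+x. g x \<partial>lborel)" by simp
  then show "(\<integral>\<^sup>+x \<in> {x. 0 < 1 - F (- x) \<and> 1 - F (- x) < 1}.
      ennreal ((1 - F (- x)) * (1 - (1 - F (- x))) / f (- x)) \<partial>lborel) < \<infinity>"
    using fin by (simp add: g_def indicator_def mult.commute conj_commute)
qed

lemma hazard_tendsto_at_bot_at_top:
  fixes F f :: "real \<Rightarrow> real"
  assumes "filterlim (hazard F f) at_top at_infinity"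
  shows "filterlim (\<lambda>x. f x / F x) at_top at_bot" and "filterlim (\<lambda>x. f x / (1 - F x)) at_top at_top"
proof -
  have "\<forall>\<^sub>F x in at_bot. hazard F f x = f x / F x"
    unfolding eventually_at_bot_linorder
    by (intro exI[of _ "quantile F (1/2) - 1"]) (auto simp: hazard_def)
  with filterlim_mono[OF assms order_refl at_bot_le_at_infinity]
  show "filterlim (\<lambda>x. f x / F x) at_top at_bot" by (simp add: filterlim_cong)
  have "\<forall>\<^sub>F x in at_top. hazard F f x = f x / (1 - F x)"
    unfolding eventually_at_top_linorder
    by (intro exI[of _ "quantile F (1/2)"]) (auto simp: hazard_def)
  with filterlim_mono[OF assms order_refl at_top_le_at_infinity]
  show "filterlim (\<lambda>x. f x / (1 - F x)) at_top at_top" by (simp add: filterlim_cong)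
qed

section \<open>Quantile spacings in a thin lower tail\<close>

lemma thin_lower_tail_growth:
  assumes "thin_lower_tail G" "mono G" "0 < \<delta>" "1 \<le> K"
  obtains t where "0 < t" "\<And>y z. y + \<delta> \<le> z \<Longrightarrow> 0 < G y \<Longrightarrow> G z \<le> t \<Longrightarrow> K * G y \<le> G z"
proof -
  define d where "d = \<delta> / (1 + ln K)"
  have "0 < 1 + ln K" using \<open>1 \<le> K\<close> by (smt (verit) ln_ge_zero)
  then have "0 < d" using \<open>0 < \<delta>\<close> by (simp add: d_def)
  then obtain t where "0 < t"
    and gap: "\<And>y z. y \<le> z \<Longrightarrow> 0 < G y \<Longrightarrow> G z \<le> t \<Longrightarrow> z - y \<le> d * (1 + ln (G z / G y))"
    using thin_lower_tailE[OF \<open>thin_lower_tail G\<close>] by blast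
  show thesis
  proof (rule that[OF \<open>0 < t\<close>])
    fix y z assume "y + \<delta> \<le> z" "0 < G y" "G z \<le> t"
    then have "d * (1 + ln K) \<le> d * (1 + ln (G z / G y))"
      using gap[of y z] \<open>0 < \<delta>\<close> \<open>0 < 1 + ln K\<close> by (simp add: d_def)
    then have "ln K \<le> ln (G z / G y)" using \<open>0 < d\<close> by simp
    moreover have "0 < G z / G y"
      using monoD[OF \<open>mono G\<close>, of y z] \<open>y + \<delta> \<le> z\<close> \<open>0 < \<delta>\<close> \<open>0 < G y\<close> by simp
    ultimately have "K \<le> G z / G y" using \<open>1 \<le> K\<close> by simp
    then show "K * G y \<le> G z" using \<open>0 < G y\<close> by (simp add: field_simps)
  qed
qed

lemma one_minus_power_le_inverse:
  fixes x :: real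
  assumes "0 \<le> x" "x \<le> 1"
  shows "(1 - x) ^ n \<le> 1 / (1 + real n * x)"
proof -
  have "(1 - x) ^ n * (1 + real n * x) \<le> (1 - x) ^ n * (1 + x) ^ n"
    using Bernoulli_inequality[of x n] assms by (intro mult_left_mono) auto
  also have "\<dots> = (1 - x\<^sup>2) ^ n" by (simp add: power_mult_distrib[symmetric] power2_eq_square algebra_simps)
  also have "\<dots> \<le> 1" using assms by (intro power_le_one) (auto simp: power_le_one)
  finally show ?thesis using assms by (simp add: field_simps add_pos_nonneg)
qed

lemma thin_lower_tail_around_level:
  assumes thin: "thin_lower_tail G" and "mono G" and G_nonneg: "\<And>x. 0 \<le> G x"
    and "0 < \<delta>" "1 \<le> K"
  shows "\<forall>\<^sub>F n in sequentially. \<forall>a. G a = 1 / real n \<longrightarrow>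
           real n * G (a - \<delta>) \<le> 1 / K \<and> K \<le> real n * G (a + \<delta>)"
proof -
  obtain t where "0 < t" and growth: "\<And>y z. y + \<delta> \<le> z \<Longrightarrow> 0 < G y \<Longrightarrow> G z \<le> t \<Longrightarrow> K * G y \<le> G z"
    using thin_lower_tail_growth[OF thin \<open>mono G\<close> \<open>0 < \<delta>\<close> \<open>1 \<le> K\<close>] by blast
  have "\<forall>\<^sub>F n in sequentially. K / t \<le> real n"
    by (rule eventually_sequentiallyI[of "nat \<lceil>K / t\<rceil>"]) linarith
  then show ?thesis
  proof (rule eventually_mono, intro allI impI conjI)
    fix n :: nat and a assume "K / t \<le> real n" and a: "G a = 1 / real n"
    then have "0 < real n" using \<open>1 \<le> K\<close> \<open>0 < t\<close> by (smt (verit) divide_pos_pos)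
    have "K \<le> t * real n" using \<open>K / t \<le> real n\<close> \<open>0 < t\<close> by (simp add: divide_le_eq mult.commute)
    then have "G a \<le> t" using a \<open>1 \<le> K\<close> \<open>0 < real n\<close> by (simp add: divide_le_eq mult.commute)
    show "real n * G (a - \<delta>) \<le> 1 / K"
    proof (cases "0 < G (a - \<delta>)")
      case True
      then have "K * G (a - \<delta>) \<le> 1 / real n" using growth[of "a - \<delta>" a] a \<open>G a \<le> t\<close> by simp
      then show ?thesis using \<open>0 < real n\<close> \<open>1 \<le> K\<close> by (simp add: field_simps)
    next
      case False
      then have "G (a - \<delta>) = 0" using G_nonneg[of "a - \<delta>"] by simp
      then show ?thesis using \<open>1 \<le> K\<close> by simp
    qed
    show "K \<le> real n * G (a + \<delta>)"
    proof (cases "G (a + \<delta>) \<le> t")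
      case True
      then have "K * G a \<le> G (a + \<delta>)" using growth[of a "a + \<delta>"] a \<open>0 < real n\<close> by simp
      then show ?thesis using a \<open>0 < real n\<close> by (simp add: field_simps)
    next
      case False
      then have "t * real n \<le> real n * G (a + \<delta>)" using \<open>0 < real n\<close> by simp
      then show ?thesis using \<open>K \<le> t * real n\<close> by linarith
    qed
  qed
qed

lemma thin_lower_tail_extremes:
  assumes thin: "thin_lower_tail G" and "mono G" and G_bounds: "\<And>x. 0 \<le> G x" "\<And>x. G x \<le> 1"
    and "0 < \<delta>" "0 < r"
  shows "\<forall>\<^sub>F n in sequentially.
           \<forall>a. G a = 1 / real n \<longrightarrow> real n * G (a - \<delta>) + (1 - G (a + \<delta>)) ^ n < r"
proof -
  define K where "K = 2 / r + 1"
  have "1 \<le> K" using \<open>0 < r\<close> by (simp add: K_def)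
  have sum_lt: "1 / K + 1 / (1 + K) < r"
  proof -
    have "1 / (1 + K) < 1 / K" using \<open>1 \<le> K\<close> by (simp add: frac_less2)
    moreover have "2 / K < r" using \<open>0 < r\<close> by (simp add: K_def divide_less_eq field_simps)
    ultimately show ?thesis by simp
  qed
  from thin_lower_tail_around_level[OF thin \<open>mono G\<close> G_bounds(1) \<open>0 < \<delta>\<close> \<open>1 \<le> K\<close>]
  show ?thesis
  proof (rule eventually_mono, intro allI impI)
    fix n :: nat and a assume "G a = 1 / real n"
      and "\<forall>a. G a = 1 / real n \<longrightarrow> real n * G (a - \<delta>) \<le> 1 / K \<and> K \<le> real n * G (a + \<delta>)"
    then have lower: "real n * G (a - \<delta>) \<le> 1 / K" and upper: "K \<le> real n * G (a + \<delta>)" by auto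
    have "1 / (1 + real n * G (a + \<delta>)) \<le> 1 / (1 + K)"
      using upper \<open>1 \<le> K\<close> by (intro frac_le) auto
    then have "(1 - G (a + \<delta>)) ^ n \<le> 1 / (1 + K)"
      using one_minus_power_le_inverse[of "G (a + \<delta>)" n] G_bounds by (meson order_trans)
    with lower sum_lt
    show "real n * G (a - \<delta>) + (1 - G (a + \<delta>)) ^ n < r" by linarith
  qed
qed

lemma one_plus_ln_inverse_sq_le:
  fixes u :: real
  assumes "0 < u" "u \<le> 1"
  shows "(1 + ln (1 / u))\<^sup>2 \<le> 25 * u powr (-1/2)"
proof -
  define v where "v = u powr (-1/4)"
  have "1 \<le> v" unfolding v_def using assms by (simp add: powr_minus one_le_inverse_iff powr_le1)
  have "ln (1 / u) = 4 * ln v" unfolding v_def using assms by (simp add: ln_powr ln_div)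
  also have "\<dots> \<le> 4 * (v - 1)" using ln_le_minus_one[of v] \<open>1 \<le> v\<close> by simp
  finally have "(1 + ln (1 / u))\<^sup>2 \<le> (5 * v)\<^sup>2"
    using assms \<open>1 \<le> v\<close> by (intro power_mono) auto
  also have "\<dots> = 25 * u powr (-1/2)"
    unfolding v_def using assms by (simp add: power_mult_distrib power2_eq_square powr_add[symmetric])
  finally show ?thesis .
qed

lemma thin_lower_tail_quantile_gap:
  assumes "thin_lower_tail G" "0 < c"
  shows "\<forall>\<^sub>F n in sequentially. \<forall>a y. G a = 1 / real n \<longrightarrow> y \<le> a \<longrightarrow> 0 < G y \<longrightarrow> G y \<le> 1 / real n
           \<longrightarrow> (a - y)\<^sup>2 \<le> c * (real n * G y) powr (-1/2)"
proof -
  define d where "d = sqrt c / 5"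
  have "0 < d" using \<open>0 < c\<close> by (simp add: d_def)
  then obtain t where "0 < t"
    and gap: "\<And>y z. y \<le> z \<Longrightarrow> 0 < G y \<Longrightarrow> G z \<le> t \<Longrightarrow> z - y \<le> d * (1 + ln (G z / G y))"
    using thin_lower_tailE[OF \<open>thin_lower_tail G\<close>] by blast
  have "\<forall>\<^sub>F n in sequentially. 1 / t \<le> real n"
    by (rule eventually_sequentiallyI[of "nat \<lceil>1 / t\<rceil>"]) linarith
  then show ?thesis
  proof (rule eventually_mono, intro allI impI)
    fix n :: nat and a y
    assume n: "1 / t \<le> real n" and a: "G a = 1 / real n" and "y \<le> a" "0 < G y" "G y \<le> 1 / real n"
    have "0 < real n" using n \<open>0 < t\<close> by (smt (verit) divide_pos_pos)
    have u: "0 < real n * G y" "real n * G y \<le> 1"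
      using \<open>0 < G y\<close> \<open>G y \<le> 1 / real n\<close> \<open>0 < real n\<close> by (auto simp: field_simps)
    have "1 / real n \<le> t" using n \<open>0 < t\<close> \<open>0 < real n\<close> by (simp add: field_simps)
    then have "a - y \<le> d * (1 + ln (1 / (real n * G y)))"
      using gap[of y a] a \<open>y \<le> a\<close> \<open>0 < G y\<close> by simp
    then have "(a - y)\<^sup>2 \<le> (d * (1 + ln (1 / (real n * G y))))\<^sup>2"
      using \<open>y \<le> a\<close> by (intro power_mono) auto
    also have "\<dots> = d\<^sup>2 * (1 + ln (1 / (real n * G y)))\<^sup>2" by (simp add: power_mult_distrib)
    also have "\<dots> \<le> d\<^sup>2 * (25 * (real n * G y) powr (-1/2))"
      using one_plus_ln_inverse_sq_le[OF u] by (intro mult_left_mono) auto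
    also have "\<dots> = c * (real n * G y) powr (-1/2)"
      using \<open>0 < c\<close> by (simp add: d_def power_divide)
    finally show "(a - y)\<^sup>2 \<le> c * (real n * G y) powr (-1/2)" .
  qed
qed

lemma nn_integral_sq_le_of_quantile_gap:
  fixes q :: "real \<Rightarrow> real" and n :: real
  assumes "0 < n" "0 \<le> c"
    and gap: "\<And>p. 0 < p \<Longrightarrow> p \<le> 1 / n \<Longrightarrow> (a - q p)\<^sup>2 \<le> c * (n * p) powr (-1/2)"
  shows "ennreal n * (\<integral>\<^sup>+p \<in> {0..1 / n}. ennreal ((m - q p)\<^sup>2) \<partial>lborel) \<le> ennreal (2 * (m - a)\<^sup>2 + 4 * c)"
proof -
  define w where "w = (\<lambda>p. 2 * (m - a)\<^sup>2 + 2 * c * n powr (-1/2) * p powr (-1/2))"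
  have "((\<lambda>p. p powr (-1/2)) has_integral (1 / n) powr (1/2) / (1/2)) {0..1 / n}"
    using has_integral_powr_from_0[of "-1/2" "1 / n"] \<open>0 < n\<close> by simp
  from has_integral_add[OF has_integral_const_real[of "2 * (m - a)\<^sup>2" 0 "1 / n"]
      has_integral_mult_right[OF this, of "2 * c * n powr (-1/2)"]]
  have "(w has_integral 2 * (m - a)\<^sup>2 * (1 / n) + 2 * c * (n powr (-1/2) * (1 / n) powr (1/2)) * 2)
      {0..1 / n}"
    using \<open>0 < n\<close> by (simp add: w_def mult.assoc)
  moreover have "n powr (-1/2) * (1 / n) powr (1/2) = 1 / n"
    using \<open>0 < n\<close> by (simp add: powr_divide powr_minus_divide powr_add[symmetric])
  ultimately have "(w has_integral (2 * (m - a)\<^sup>2 + 4 * c) / n) {0..1 / n}"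
    by (simp add: add_divide_distrib)
  then have "(\<integral>\<^sup>+p \<in> {0..1 / n}. ennreal (w p) \<partial>lborel) = ennreal ((2 * (m - a)\<^sup>2 + 4 * c) / n)"
    using \<open>0 \<le> c\<close> by (intro nn_integral_has_integral_lebesgue') (auto simp: w_def)
  moreover have "(\<integral>\<^sup>+p \<in> {0..1 / n}. ennreal ((m - q p)\<^sup>2) \<partial>lborel)
      \<le> (\<integral>\<^sup>+p \<in> {0..1 / n}. ennreal (w p) \<partial>lborel)"
  proof (intro nn_integral_mono_AE, use AE_lborel_singleton[of 0] in eventually_elim)
    case (elim p)
    show ?case
    proof (cases "p \<in> {0..1 / n}")
      case True
      then have "0 < p" "p \<le> 1 / n" using elim by auto
      have "(m - q p)\<^sup>2 \<le> 2 * (m - a)\<^sup>2 + 2 * (a - q p)\<^sup>2"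
        using zero_le_power2[of "(m - a) - (a - q p)"] by (simp add: power2_eq_square algebra_simps)
      also have "\<dots> \<le> w p"
        using gap[OF \<open>0 < p\<close> \<open>p \<le> 1 / n\<close>] \<open>0 < n\<close> \<open>0 < p\<close> by (simp add: w_def powr_mult)
      finally show ?thesis using True by (simp add: ennreal_leI)
    qed simp
  qed
  ultimately have "ennreal n * (\<integral>\<^sup>+p \<in> {0..1 / n}. ennreal ((m - q p)\<^sup>2) \<partial>lborel)
      \<le> ennreal n * ennreal ((2 * (m - a)\<^sup>2 + 4 * c) / n)"
    by (simp add: mult_left_mono)
  also have "\<dots> = ennreal (2 * (m - a)\<^sup>2 + 4 * c)"
    using \<open>0 < n\<close> \<open>0 \<le> c\<close> by (simp add: ennreal_mult''[symmetric])
  finally show ?thesis .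
qed

section \<open>Extremes of an i.i.d. sample\<close>

lemma (in prob_space) cdf_diff_eq_integral_density:
  fixes Y :: "'a \<Rightarrow> real" and f :: "real \<Rightarrow> real"
  assumes dist: "distributed M lborel Y (\<lambda>x. ennreal (f x))"
    and f_nonneg: "\<And>x. 0 \<le> f x" and f_cont: "continuous_on UNIV f" and "a \<le> b"
  shows "measure M {w \<in> space M. Y w \<le> b} - measure M {w \<in> space M. Y w \<le> a} = integral {a..b} f"
proof -
  have [measurable]: "Y \<in> borel_measurable M"
    using distributed_measurable[OF dist] by simp
  have f_int: "(f has_integral integral {a..b} f) {a..b}"
    using f_cont by (intro integrable_integral integrable_continuous_real) (auto intro: continuous_on_subset)
  have "{w \<in> space M. Y w \<le> b} = {w \<in> space M. Y w \<le> a} \<union> (Y -` {a<..b} \<inter> space M)"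
    using \<open>a \<le> b\<close> by auto
  then have split: "measure M {w \<in> space M. Y w \<le> b} =
      measure M {w \<in> space M. Y w \<le> a} + measure M (Y -` {a<..b} \<inter> space M)"
    by (simp only:) (rule finite_measure_Union; auto)
  have "emeasure M (Y -` {a<..b} \<inter> space M) = (\<integral>\<^sup>+x \<in> {a<..b}. ennreal (f x) \<partial>lborel)"
    using distributed_emeasure[OF dist] by (simp add: mult.commute)
  also have "\<dots> = (\<integral>\<^sup>+x \<in> {a..b}. ennreal (f x) \<partial>lborel)"
    by (rule nn_integral_cong_AE, use AE_lborel_singleton[of a] in eventually_elim) (auto simp: indicator_def)
  also have "\<dots> = ennreal (integral {a..b} f)"
    using f_nonneg f_int by (rule nn_integral_has_integral_lebesgue')
  finally have "measure M (Y -` {a<..b} \<inter> space M) = integral {a..b} f"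
    using has_integral_nonneg[OF f_int f_nonneg] by (simp add: measure_def)
  with split show ?thesis by simp
qed

lemma (in prob_space) cdf_has_real_derivative_density:
  fixes Y :: "'a \<Rightarrow> real" and f :: "real \<Rightarrow> real"
  assumes dist: "distributed M lborel Y (\<lambda>x. ennreal (f x))"
    and f_nonneg: "\<And>x. 0 \<le> f x" and f_cont: "continuous_on UNIV f"
  shows "((\<lambda>x. measure M {w \<in> space M. Y w \<le> x}) has_real_derivative f x) (at x)"
proof -
  let ?G = "\<lambda>x. measure M {w \<in> space M. Y w \<le> x}"
  have "((\<lambda>y. ?G (x - 1) + integral {x - 1..y} f) has_real_derivative f x) (at x within {x - 1..x + 1})"
    using integral_has_real_derivative[OF continuous_on_subset[OF f_cont], of "x - 1" "x + 1" x]
    by (auto intro!: derivative_eq_intros)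
  then have "((\<lambda>y. ?G (x - 1) + integral {x - 1..y} f) has_real_derivative f x) (at x)"
    by (simp add: at_within_Icc_at)
  then show ?thesis
  proof (rule has_field_derivative_transform_within_open[where S = "{x - 1<..<x + 1}"])
    fix y assume "y \<in> {x - 1<..<x + 1}"
    then show "?G (x - 1) + integral {x - 1..y} f = ?G y"
      using cdf_diff_eq_integral_density[OF dist f_nonneg f_cont, of "x - 1" y] by simp
  qed auto
qed

lemma conv_prob_zero_cong:
  assumes "\<forall>\<^sub>F n in sequentially. \<forall>w \<in> space M. Y n w = Z n w"
  shows "conv_prob_zero M Y \<longleftrightarrow> conv_prob_zero M Z"
proof -
  have "((\<lambda>n. measure M {w \<in> space M. Y n w > ennreal e}) \<longlonglongrightarrow> 0) \<longleftrightarrow>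
      ((\<lambda>n. measure M {w \<in> space M. Z n w > ennreal e}) \<longlonglongrightarrow> 0)" for e
    by (rule tendsto_cong, use assms in eventually_elim) (metis (no_types, lifting) Collect_cong)
  then show ?thesis unfolding conv_prob_zero_def by simp
qed

lemma nn_integral_emp_quantile_top_eq:
  assumes "0 < n" and "mono G"
  shows "(\<integral>\<^sup>+p \<in> {(real n - 1) / real n..1}. ennreal ((quantile (emp_cdf X n w) p - quantile G p)\<^sup>2) \<partial>lborel) =
    (\<integral>\<^sup>+u \<in> {0..1 / real n}. ennreal ((Min ((\<lambda>i. - X i w) ` {..<n}) + quantile G (1 - u))\<^sup>2) \<partial>lborel)"
proof -
  let ?g = "\<lambda>p. ennreal ((quantile (emp_cdf X n w) p - quantile G p)\<^sup>2)"
  have [measurable]: "quantile (emp_cdf X n w) \<in> borel_measurable borel" "quantile G \<in> borel_measurable borel"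
    by (simp_all add: borel_measurable_quantile mono_emp_cdf \<open>mono G\<close>)
  have "- Min ((\<lambda>i. - X i w) ` {..<n}) = Max (uminus ` (\<lambda>i. - X i w) ` {..<n})"
    using \<open>0 < n\<close> by (intro minus_Min_eq_Max) auto
  then have Max: "Max ((\<lambda>i. X i w) ` {..<n}) = - Min ((\<lambda>i. - X i w) ` {..<n})"
    by (simp add: image_image)
  have "(\<integral>\<^sup>+p \<in> {(real n - 1) / real n..1}. ?g p \<partial>lborel) =
      (\<integral>\<^sup>+u. ?g (1 - u) * indicator {(real n - 1) / real n..1} (1 - u) \<partial>lborel)"
    using nn_integral_real_affine[of "\<lambda>p. ?g p * indicator {(real n - 1) / real n..1} p" "-1" 1]
    by simp
  also have "\<dots> = (\<integral>\<^sup>+u \<in> {0..1 / real n}. ennreal ((Min ((\<lambda>i. - X i w) ` {..<n}) + quantile G (1 - u))\<^sup>2) \<partial>lborel)"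
  proof (rule nn_integral_cong_AE, use AE_lborel_singleton[of 0] AE_lborel_singleton[of "1 / real n"] in eventually_elim)
    case (elim u)
    have "1 - u \<in> {(real n - 1) / real n..1} \<longleftrightarrow> u \<in> {0..1 / real n}"
      using \<open>0 < n\<close> by (auto simp: field_simps)
    moreover have "(real n - 1) / real n < 1 - u" "1 - u \<le> 1" if "u \<in> {0..1 / real n}"
      using that elim \<open>0 < n\<close> by (auto simp: field_simps)
    ultimately show ?case
      by (auto simp: indicator_def quantile_emp_cdf_Max[OF \<open>0 < n\<close>] Max power2_commute add.commute)
  qed
  finally show ?thesis .
qed

lemma Min_far_cases:
  fixes x :: "nat \<Rightarrow> real"
  assumes "0 < n" "\<delta> < \<bar>Min (x ` {..<n}) - a\<bar>"
  shows "(\<exists>i<n. x i < a - \<delta>) \<or> (\<forall>i<n. a + \<delta> < x i)"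
proof -
  have "Min (x ` {..<n}) \<in> x ` {..<n}" using \<open>0 < n\<close> by (intro Min_in) auto
  moreover have "Min (x ` {..<n}) \<le> x i" if "i < n" for i using that by simp
  ultimately show ?thesis using assms(2) by (cases "Min (x ` {..<n}) < a - \<delta>") force+
qed

locale iid_sample = prob_space M for M :: "'a measure" +
  fixes X :: "nat \<Rightarrow> 'a \<Rightarrow> real" and F :: "real \<Rightarrow> real"
  assumes random_variable: "\<And>i. X i \<in> borel_measurable M"
    and indep: "indep_vars (\<lambda>_. borel) X UNIV"
    and identically_distributed: "\<And>i. distr M borel (X i) = distr M borel (X 0)"
    and cdf_eq: "\<And>x. F x = measure M {w \<in> space M. X 0 w \<le> x}"
begin

declare random_variable [measurable]

lemma F_eq_cdf: "F = cdf (distr M borel (X 0))"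
  by (rule ext) (simp add: cdf_eq cdf_def measure_distr vimage_def Int_def conj_commute)

interpretation distribution: real_distribution "distr M borel (X 0)"
  by simp

lemma mono_F: "mono F"
  unfolding F_eq_cdf by (rule monoI) (rule distribution.cdf_nondecreasing)

lemma F_nonneg: "0 \<le> F x" and F_le_1: "F x \<le> 1"
  unfolding F_eq_cdf by (rule distribution.cdf_nonneg distribution.cdf_bounded_prob)+

lemma F_at_bot: "(F \<longlongrightarrow> 0) at_bot" and F_at_top: "(F \<longlongrightarrow> 1) at_top"
  unfolding F_eq_cdf by (rule distribution.cdf_lim_at_bot distribution.cdf_lim_at_top_prob)+

lemma measure_X_le: "measure M {w \<in> space M. X i w \<le> c} = F c"
proof -
  have "measure M {w \<in> space M. X i w \<le> c} = measure (distr M borel (X i)) {..c}"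
    by (simp add: measure_distr vimage_def Int_def conj_commute)
  also have "\<dots> = measure (distr M borel (X 0)) {..c}" by (simp add: identically_distributed[of i])
  finally show ?thesis by (simp add: F_eq_cdf cdf_def)
qed

lemma measure_ex_X_less_le: "measure M {w \<in> space M. \<exists>i<n. X i w < c} \<le> real n * F c"
proof -
  have "measure M {w \<in> space M. \<exists>i<n. X i w < c} \<le> measure M (\<Union>i<n. {w \<in> space M. X i w \<le> c})"
    by (rule finite_measure_mono) auto
  also have "\<dots> \<le> (\<Sum>i<n. measure M {w \<in> space M. X i w \<le> c})"
    by (rule finite_measure_subadditive_finite) auto
  finally show ?thesis by (simp add: measure_X_le)
qed

lemma measure_all_X_greater:
  assumes "0 < n"
  shows "measure M {w \<in> space M. \<forall>i<n. c < X i w} = (1 - F c) ^ n"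
proof -
  have "{w \<in> space M. \<forall>i<n. c < X i w} = (\<Inter>i<n. X i -` {c<..} \<inter> space M)"
    using assms by auto
  also have "measure M \<dots> = (\<Prod>i<n. measure M (X i -` {c<..} \<inter> space M))"
    using assms by (intro indep_varsD[OF indep]) auto
  also have "\<dots> = (\<Prod>i<n. 1 - F c)"
  proof (rule prod.cong)
    fix i
    have "X i -` {c<..} \<inter> space M = space M - {w \<in> space M. X i w \<le> c}" by auto
    then show "measure M (X i -` {c<..} \<inter> space M) = 1 - F c"
      by (simp add: prob_compl measure_X_le)
  qed simp
  finally show ?thesis by simp
qed

lemma measure_X_less:
  assumes "continuous_on UNIV F"
  shows "measure M {w \<in> space M. X i w < c} = F c"
proof -
  have "(F \<longlongrightarrow> measure (distr M borel (X 0)) {..<c}) (at_left c)"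
    unfolding F_eq_cdf by (rule distribution.cdf_at_left)
  moreover have "(F \<longlongrightarrow> F c) (at_left c)"
    using assms by (simp add: continuous_on_eq_continuous_at isCont_def filterlim_at_split)
  ultimately have "measure (distr M borel (X 0)) {..<c} = F c"
    by (rule tendsto_unique[rotated]) simp
  moreover have "measure M {w \<in> space M. X i w < c} = measure (distr M borel (X i)) {..<c}"
    by (simp add: measure_distr vimage_def Int_def conj_commute)
  ultimately show ?thesis by (simp add: identically_distributed[of i])
qed

lemma iid_sample_uminus:
  assumes "continuous_on UNIV F"
  shows "iid_sample M (\<lambda>i w. - X i w) (\<lambda>x. 1 - F (- x))"
proof unfold_locales
  show "indep_vars (\<lambda>_. borel) (\<lambda>i w. - X i w) UNIV"
    using indep_vars_compose2[OF indep, of "\<lambda>_. uminus" "\<lambda>_. borel"] by simp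
  show "distr M borel (\<lambda>w. - X i w) = distr M borel (\<lambda>w. - X 0 w)" for i
    using distr_distr[of uminus borel borel "X i" M] distr_distr[of uminus borel borel "X 0" M]
    by (simp add: identically_distributed[of i] o_def)
  show "1 - F (- x) = measure M {w \<in> space M. - X 0 w \<le> x}" for x
  proof -
    have "{w \<in> space M. - X 0 w \<le> x} = space M - {w \<in> space M. X 0 w < - x}" by auto
    then show ?thesis by (simp add: prob_compl measure_X_less[OF assms])
  qed
qed simp

lemma measure_Min_X_far_le:
  assumes "0 < n" and A: "A \<subseteq> {w \<in> space M. \<delta> < \<bar>Min ((\<lambda>i. X i w) ` {..<n}) - a\<bar>}"
  shows "measure M A \<le> real n * F (a - \<delta>) + (1 - F (a + \<delta>)) ^ n"
proof -
  have "A \<subseteq> {w \<in> space M. \<exists>i<n. X i w < a - \<delta>} \<union> {w \<in> space M. \<forall>i<n. a + \<delta> < X i w}"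
    using Min_far_cases[OF \<open>0 < n\<close>] A by blast
  then have "measure M A \<le>
      measure M ({w \<in> space M. \<exists>i<n. X i w < a - \<delta>} \<union> {w \<in> space M. \<forall>i<n. a + \<delta> < X i w})"
    by (intro finite_measure_mono) auto
  also have "\<dots> \<le> measure M {w \<in> space M. \<exists>i<n. X i w < a - \<delta>} + measure M {w \<in> space M. \<forall>i<n. a + \<delta> < X i w}"
    by (intro measure_Un_le) auto
  also have "\<dots> \<le> real n * F (a - \<delta>) + (1 - F (a + \<delta>)) ^ n"
    using measure_ex_X_less_le measure_all_X_greater[OF \<open>0 < n\<close>] by simp
  finally show ?thesis .
qed

(* q is any right inverse of F on (0, 1), so that the lemma also applies to the sample -X with
   q u = - quantile F (1 - u). *)
lemma conv_prob_zero_sample_min: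
  assumes thin: "thin_lower_tail F" and q: "\<And>p. 0 < p \<Longrightarrow> p < 1 \<Longrightarrow> F (q p) = p"
  shows "conv_prob_zero M (\<lambda>n w. ennreal (real n) *
    (\<integral>\<^sup>+p \<in> {0..1 / real n}. ennreal ((Min ((\<lambda>i. X i w) ` {..<n}) - q p)\<^sup>2) \<partial>lborel))"
    (is "conv_prob_zero M ?Y")
  unfolding conv_prob_zero_def
proof (intro allI impI order_tendstoI)
  fix e r :: real assume "0 < e" "0 < r"
  define \<delta> where "\<delta> = sqrt e / 2"
  define c where "c = e / 8"
  have "0 < \<delta>" "0 < c" using \<open>0 < e\<close> by (simp_all add: \<delta>_def c_def)
  have e: "e = 2 * \<delta>\<^sup>2 + 4 * c" using \<open>0 < e\<close> by (simp add: \<delta>_def c_def power_divide)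
  show "\<forall>\<^sub>F n in sequentially. measure M {w \<in> space M. ennreal e < ?Y n w} < r"
    using thin_lower_tail_extremes[OF thin mono_F F_nonneg F_le_1 \<open>0 < \<delta>\<close> \<open>0 < r\<close>]
      thin_lower_tail_quantile_gap[OF thin \<open>0 < c\<close>] eventually_ge_at_top[of 2]
  proof eventually_elim
    case (elim n)
    have n: "0 < n" "0 < 1 / real n" "1 / real n < 1" using \<open>2 \<le> n\<close> by auto
    define a where "a = q (1 / real n)"
    have Fa: "F a = 1 / real n" using q n by (simp add: a_def)
    have "(a - q p)\<^sup>2 \<le> c * (real n * p) powr (-1/2)" if "0 < p" "p \<le> 1 / real n" for p
    proof -
      have Fq: "F (q p) = p" using q[of p] that n by linarith
      have "q p \<le> a"
      proof (rule ccontr)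
        assume "\<not> q p \<le> a"
        then have "1 / real n \<le> p" using monoD[OF mono_F, of a "q p"] Fa Fq by simp
        then show False using \<open>\<not> q p \<le> a\<close> \<open>p \<le> 1 / real n\<close> by (simp add: a_def)
      qed
      then show ?thesis using elim(2)[rule_format, OF Fa \<open>q p \<le> a\<close>] Fq that by simp
    qed
    then have bound: "?Y n w \<le> ennreal (2 * (Min ((\<lambda>i. X i w) ` {..<n}) - a)\<^sup>2 + 4 * c)" for w
      using nn_integral_sq_le_of_quantile_gap[of "real n"] n \<open>0 < c\<close> by simp
    have "\<delta> < \<bar>Min ((\<lambda>i. X i w) ` {..<n}) - a\<bar>" if "ennreal e < ?Y n w" for w
    proof -
      have "ennreal e < ennreal (2 * (Min ((\<lambda>i. X i w) ` {..<n}) - a)\<^sup>2 + 4 * c)"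
        using less_le_trans[OF that bound] .
      then have "\<delta>\<^sup>2 < (Min ((\<lambda>i. X i w) ` {..<n}) - a)\<^sup>2"
        using \<open>0 < e\<close> e by (simp add: ennreal_less_iff)
      then show ?thesis using \<open>0 < \<delta>\<close> abs_le_square_iff[of _ \<delta>] by (auto simp: not_le[symmetric])
    qed
    then have "measure M {w \<in> space M. ennreal e < ?Y n w} \<le> real n * F (a - \<delta>) + (1 - F (a + \<delta>)) ^ n"
      by (intro measure_Min_X_far_le \<open>0 < n\<close>) auto
    also have "\<dots> < r" using elim(1) Fa by blast
    finally show ?case .
  qed
qed (simp add: less_le_trans[OF _ measure_nonneg])

lemma conv_prob_zero_lower_tail:
  assumes "continuous_on UNIV F" "thin_lower_tail F"
  shows "conv_prob_zero M (\<lambda>n w. ennreal (real n) *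
    (\<integral>\<^sup>+p \<in> {0..1 / real n}. ennreal ((quantile (emp_cdf X n w) p - quantile F p)\<^sup>2) \<partial>lborel))"
proof -
  have "(\<integral>\<^sup>+p \<in> {0..1 / real n}. ennreal ((quantile (emp_cdf X n w) p - quantile F p)\<^sup>2) \<partial>lborel) =
      (\<integral>\<^sup>+p \<in> {0..1 / real n}. ennreal ((Min ((\<lambda>i. X i w) ` {..<n}) - quantile F p)\<^sup>2) \<partial>lborel)" for n w
    by (rule nn_integral_cong_AE, use AE_lborel_singleton[of 0] in eventually_elim)
       (auto simp: quantile_emp_cdf_Min indicator_def)
  moreover have "conv_prob_zero M (\<lambda>n w. ennreal (real n) *
    (\<integral>\<^sup>+p \<in> {0..1 / real n}. ennreal ((Min ((\<lambda>i. X i w) ` {..<n}) - quantile F p)\<^sup>2) \<partial>lborel))"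
    using assms cdf_quantile_eq[OF _ F_at_bot F_at_top] by (intro conv_prob_zero_sample_min) auto
  ultimately show ?thesis by simp
qed

lemma conv_prob_zero_upper_tail:
  assumes cont: "continuous_on UNIV F" and thin: "thin_lower_tail (\<lambda>x. 1 - F (- x))"
  shows "conv_prob_zero M (\<lambda>n w. ennreal (real n) *
    (\<integral>\<^sup>+p \<in> {(real n - 1) / real n..1}. ennreal ((quantile (emp_cdf X n w) p - quantile F p)\<^sup>2) \<partial>lborel))"
proof -
  interpret reflected: iid_sample M "\<lambda>i w. - X i w" "\<lambda>x. 1 - F (- x)"
    by (rule iid_sample_uminus[OF cont])
  have conv: "conv_prob_zero M (\<lambda>n w. ennreal (real n) *
    (\<integral>\<^sup>+u \<in> {0..1 / real n}. ennreal ((Min ((\<lambda>i. - X i w) ` {..<n}) + quantile F (1 - u))\<^sup>2) \<partial>lborel))"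
    using reflected.conv_prob_zero_sample_min[where q = "\<lambda>u. - quantile F (1 - u)"]
      thin cdf_quantile_eq[OF cont F_at_bot F_at_top] by simp
  have "\<forall>\<^sub>F n in sequentially. \<forall>w \<in> space M.
    ennreal (real n) * (\<integral>\<^sup>+p \<in> {(real n - 1) / real n..1}.
      ennreal ((quantile (emp_cdf X n w) p - quantile F p)\<^sup>2) \<partial>lborel) =
    ennreal (real n) * (\<integral>\<^sup>+u \<in> {0..1 / real n}.
      ennreal ((Min ((\<lambda>i. - X i w) ` {..<n}) + quantile F (1 - u))\<^sup>2) \<partial>lborel)"
    using eventually_gt_at_top[of 0]
    by eventually_elim (simp add: nn_integral_emp_quantile_top_eq mono_F)
  from conv_prob_zero_cong[OF this] conv show ?thesis by simp
qed

end

theorem theorem3p2: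
  fixes M :: "'a measure" and X :: "nat \<Rightarrow> 'a \<Rightarrow> real"
    and F f :: "real \<Rightarrow> real"
  assumes "prob_space M"
    and "\<And>i. X i \<in> borel_measurable M"
    and "prob_space.indep_vars M (\<lambda>_. borel) X UNIV"
    and "\<And>i. distr M borel (X i) = distr M borel (X 0)"
    and "\<And>x. F x = measure M {w \<in> space M. X 0 w \<le> x}"
    and "integrable M (\<lambda>w. (X 0 w)\<^sup>2)"
    and "\<And>x. 0 \<le> f x"
    and "continuous_on UNIV f"
    and "distributed M lborel (X 0) (\<lambda>x. ennreal (f x))"
  shows "(filterlim (hazard F f) at_top at_infinity \<longrightarrow> condition1 M X F)
       \<and> (((\<forall>x. 0 < F x \<and> F x < 1 \<longrightarrow> 0 < f x) \<and>
           (\<integral>\<^sup>+ x \<in> {x. 0 < F x \<and> F x < 1}. ennreal (F x * (1 - F x) / f x) \<partial>lborel) < \<infinity>)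
          \<longrightarrow> condition1 M X F)"
proof -
  interpret iid_sample M X F
    using assms(1-5) by (simp add: iid_sample_def iid_sample_axioms_def)
  have "F = (\<lambda>x. measure M {w \<in> space M. X 0 w \<le> x})" using assms(5) by blast
  then have deriv: "(F has_real_derivative f x) (at x)" for x
    using cdf_has_real_derivative_density[OF assms(9,7,8)] by simp
  then have cont: "continuous_on UNIV F"
    using DERIV_isCont by (intro continuous_at_imp_continuous_on) blast
  have condition1_if_thin: "condition1 M X F" if "thin_lower_tail F" "thin_lower_tail (\<lambda>x. 1 - F (- x))"
    unfolding condition1_def
    using conv_prob_zero_lower_tail[OF cont that(1)] conv_prob_zero_upper_tail[OF cont that(2)] ..
  show ?thesis
  proof (intro conjI impI)
    assume "filterlim (hazard F f) at_top at_infinity"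
    note hazard = hazard_tendsto_at_bot_at_top[OF this]
    show "condition1 M X F"
      using thin_lower_tail_if_hazard[OF deriv mono_F F_nonneg hazard(1)]
        thin_upper_tail_if_hazard[OF deriv mono_F F_le_1 hazard(2)] by (rule condition1_if_thin)
  next
    assume "(\<forall>x. 0 < F x \<and> F x < 1 \<longrightarrow> 0 < f x) \<and>
      (\<integral>\<^sup>+ x \<in> {x. 0 < F x \<and> F x < 1}. ennreal (F x * (1 - F x) / f x) \<partial>lborel) < \<infinity>"
    then show "condition1 M X F"
      by (intro condition1_if_thin thin_lower_tail_if_integrable[OF deriv mono_F assms(8)]
          thin_upper_tail_if_integrable[OF deriv mono_F assms(8)]) auto
  qed
qed

end
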